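(* Let $n\ge 2$ be an integer and let $f_n(t)=\dfrac{t^{n-1}}{(1-e^{-t})^2}$ for $t>0$. Then for every $a>0$, $$I_1(a;n):=\int_0^1\bigl[(2n-3)x^2-1\bigr]\,f_n\bigl(a(1+x)\bigr)\,f_n\bigl(a(1-x)\bigr)\,dx<0 .$$ *)

theory Defs
  imports "HOL-Analysis.Analysis"
begin

definition fn_aux :: "nat \<Rightarrow> real \<Rightarrow> real" where
  "fn_aux n t = t ^ (n - 1) / (1 - exp (- t))\<^sup>2"

definition I1 :: "real \<Rightarrow> nat \<Rightarrow> real" where
  "I1 a n = integral {0..1}
     (\<lambda>x. ((2 * real n - 3) * x\<^sup>2 - 1) * fn_aux n (a * (1 + x)) * fn_aux n (a * (1 - x)))"

end

theory Submission
  imports Defs "HOL-Real_Asymp.Real_Asymp"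
begin

(* Write q(t) = t / (1 - exp (-t)), so that f_n(t) = q(t)^2 t^(n-3).  With m = n - 2,
   h(x) = x (1 - x^2)^m and W(x) = (q(a(1+x)) q(a(1-x)))^2 the integrand equals
   -a^(2m-2) h'(x) W(x).  Integrating by parts, the integral of h' W over [0,1] is
   h(1) W(1) minus the integral of h W'.  Now h > 0 on (0,1), and W is strictly decreasing there
   because q is strictly log-concave on (0,oo): (log q)'(t) = 1/t - 1/(exp t - 1) has derivative
   1/(2 sinh(t/2))^2 - 1/t^2 < 0, since sinh s > s for s > 0. *)

lemma real_less_sinh: "0 < (x::real) \<Longrightarrow> x < sinh x"
proof -
  assume "0 < x"
  have "sinh 0 - 0 < sinh x - x"
  proof (rule DERIV_pos_imp_increasing_open[OF \<open>0 < x\<close>])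
    fix y :: real assume "0 < y"
    then have "cosh y - 1 > 0" using cosh_real_ge_1[of y] cosh_real_one_iff[of y] by linarith
    then show "\<exists>d. ((\<lambda>t. sinh t - t) has_real_derivative d) (at y) \<and> 0 < d"
      by (auto intro!: derivative_eq_intros)
  qed (intro continuous_intros)
  then show ?thesis by simp
qed

lemma has_integral_neg_strict:
  fixes g :: "real \<Rightarrow> real"
  assumes "(g has_integral I) {a..b}" "a < c" "c \<le> b" "continuous_on {a..c} g"
    and "\<And>x. x \<in> {a<..<b} \<Longrightarrow> g x < 0"
  shows "I < 0"
proof -
  have int: "g integrable_on {a..b}" using assms(1) by blast
  have "integral {a..c} g < integral {a..c} (\<lambda>_. 0)"
    by (rule integral_less_real) (use assms in auto)
  moreover have "integral {c<..<b} g \<le> integral {c<..<b} (\<lambda>_. 0)"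
  proof (rule integral_le)
    show "g integrable_on {c<..<b}"
      using integrable_subinterval_real[OF int] assms
    by (simp add: integrable_on_open_interval_real)
  qed (use assms integrable_0 in \<open>auto intro: less_imp_le\<close>)
  moreover have "integral {a..c} g + integral {c..b} g = I"
    using Henstock_Kurzweil_Integration.integral_combine[OF _ _ int] assms integral_unique by auto
  ultimately show ?thesis by (simp flip: integral_open_interval_real)
qed

(* The exponential generating function of the Bernoulli numbers with B_1 = 1/2;
   its singularity at 0 is removable. *)
definition bernoulli_egf :: "real \<Rightarrow> real" where
  "bernoulli_egf t = (if t = 0 then 1 else t / (1 - exp (- t)))"

definition bernoulli_egf_logderiv :: "real \<Rightarrow> real" where
  "bernoulli_egf_logderiv t = 1 / t - exp (- t) / (1 - exp (- t))"

lemma bernoulli_egf_pos: "bernoulli_egf t > 0"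
proof (cases t "0::real" rule: linorder_cases)
  case less
  then have "1 - exp (- t) < 0" by simp
  with less show ?thesis by (simp add: bernoulli_egf_def divide_neg_neg)
qed (simp_all add: bernoulli_egf_def)

lemma fn_aux_eq_bernoulli_egf: "fn_aux n t = (bernoulli_egf t)\<^sup>2 * t ^ (n - 1) / t\<^sup>2"
  by (cases "t = 0") (simp_all add: fn_aux_def bernoulli_egf_def power_divide)

lemma has_real_derivative_bernoulli_egf:
  assumes "t \<noteq> 0"
  shows "(bernoulli_egf has_real_derivative bernoulli_egf t * bernoulli_egf_logderiv t) (at t)"
proof -
  define D where "D = ((1 - exp (- t)) - t * exp (- t)) / (1 - exp (- t))\<^sup>2"
  have denom: "1 - exp (- t) \<noteq> 0" using assms by simp
  then have "((\<lambda>t. t / (1 - exp (- t))) has_real_derivative D) (at t)"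
    unfolding D_def by (auto intro!: derivative_eq_intros simp: power2_eq_square field_simps)
  then have "(bernoulli_egf has_real_derivative D) (at t)"
    by (rule has_field_derivative_transform_within_open[of _ _ _ "- {0}"])
      (use assms in \<open>auto simp: bernoulli_egf_def\<close>)
  moreover have "bernoulli_egf t * bernoulli_egf_logderiv t = D"
  proof -
    have "t / c * (1 / t - e / c) = (c - t * e) / c\<^sup>2" if "c \<noteq> 0" for c e :: real
      using that assms by (simp add: field_simps power2_eq_square)
    then show ?thesis
      using assms denom by (simp add: D_def bernoulli_egf_def bernoulli_egf_logderiv_def)
  qed
  ultimately show ?thesis by simp
qed

lemma isCont_bernoulli_egf: "isCont bernoulli_egf t"
proof (cases "t = 0")
  case True
  have "((\<lambda>t::real. t / (1 - exp (- t))) \<longlongrightarrow> 1) (at 0)" by real_asymp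
  then have "(bernoulli_egf \<longlongrightarrow> 1) (at 0)"
    by (rule Lim_transform_eventually) (auto simp: bernoulli_egf_def eventually_at_filter)
  with True show ?thesis by (simp add: isCont_def bernoulli_egf_def)
next
  case False
  then show ?thesis using has_real_derivative_bernoulli_egf DERIV_isCont by blast
qed

lemma continuous_on_bernoulli_egf [continuous_intros]:
  "continuous_on S f \<Longrightarrow> continuous_on S (\<lambda>x. bernoulli_egf (f x))"
  using continuous_on_compose2[of UNIV bernoulli_egf S f] isCont_bernoulli_egf
  by (auto intro: continuous_at_imp_continuous_on)

lemma continuous_on_bernoulli_egf_logderiv [continuous_intros]:
  assumes "continuous_on S f" "\<And>x. x \<in> S \<Longrightarrow> f x \<noteq> 0"
  shows "continuous_on S (\<lambda>x. bernoulli_egf_logderiv (f x))"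
  unfolding bernoulli_egf_logderiv_def using assms by (intro continuous_intros) auto

lemma has_real_derivative_bernoulli_egf_logderiv:
  assumes "t \<noteq> 0"
  shows "(bernoulli_egf_logderiv has_real_derivative 1 / (2 * sinh (t / 2))\<^sup>2 - 1 / t\<^sup>2) (at t)"
proof -
  have "1 - exp (- t) \<noteq> 0" using assms by simp
  then have "(bernoulli_egf_logderiv has_real_derivative
      exp (- t) / (1 - exp (- t))\<^sup>2 - 1 / t\<^sup>2) (at t)"
    unfolding bernoulli_egf_logderiv_def [abs_def] using assms
    by (auto intro!: derivative_eq_intros simp: power2_eq_square field_simps)
  moreover have "exp (- t) / (1 - exp (- t))\<^sup>2 = 1 / (2 * sinh (t / 2))\<^sup>2"
  proof -
    have "1 - exp (- t) = exp (- (t / 2)) * (2 * sinh (t / 2))"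
      by (simp add: sinh_field_def algebra_simps flip: exp_add)
    moreover have "exp (- t) = (exp (- (t / 2)))\<^sup>2"
      by (simp add: power2_eq_square flip: exp_add)
    ultimately show ?thesis by (simp add: power_mult_distrib)
  qed
  ultimately show ?thesis by simp
qed

lemma bernoulli_egf_logderiv_strict_decreasing:
  assumes "0 < s" "s < t"
  shows "bernoulli_egf_logderiv t < bernoulli_egf_logderiv s"
proof (rule DERIV_neg_imp_decreasing_open[OF assms(2)])
  fix u assume "s < u" "u < t"
  then have "0 < u" using assms by linarith
  then have "u / 2 < sinh (u / 2)" using real_less_sinh[of "u / 2"] by simp
  then have "u\<^sup>2 < (2 * sinh (u / 2))\<^sup>2" using \<open>0 < u\<close> by (intro power_strict_mono) auto
  then have "1 / (2 * sinh (u / 2))\<^sup>2 - 1 / u\<^sup>2 < 0"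
    using \<open>0 < u\<close> by (simp add: frac_less2)
  then show "\<exists>d. (bernoulli_egf_logderiv has_real_derivative d) (at u) \<and> d < 0"
    using has_real_derivative_bernoulli_egf_logderiv \<open>0 < u\<close> by (metis less_irrefl)
next
  show "continuous_on {s..t} bernoulli_egf_logderiv"
    using assms
    by (intro continuous_on_bernoulli_egf_logderiv[of _ id, simplified] continuous_on_id) auto
qed

definition kernel_primitive :: "nat \<Rightarrow> real \<Rightarrow> real" where
  "kernel_primitive m x = x * (1 - x\<^sup>2) ^ m"

definition kernel_primitive_deriv :: "nat \<Rightarrow> real \<Rightarrow> real" where
  "kernel_primitive_deriv m x = (1 - x\<^sup>2) ^ m - 2 * real m * x\<^sup>2 * (1 - x\<^sup>2) ^ (m - 1)"

lemma has_real_derivative_kernel_primitive: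
  "(kernel_primitive m has_real_derivative kernel_primitive_deriv m x) (at x)"
  unfolding kernel_primitive_def [abs_def] kernel_primitive_deriv_def
  by (auto intro!: derivative_eq_intros simp: power2_eq_square algebra_simps)

lemma kernel_primitive_deriv_eq:
  "(1 - x\<^sup>2)\<^sup>2 * kernel_primitive_deriv m x
     = (1 - (2 * real m + 1) * x\<^sup>2) * (1 - x\<^sup>2) ^ (m + 1)"
  by (cases m) (simp_all add: kernel_primitive_deriv_def power2_eq_square algebra_simps)

lemma kernel_primitive_pos: "0 < x \<Longrightarrow> x < 1 \<Longrightarrow> 0 < kernel_primitive m x"
  unfolding kernel_primitive_def by (simp add: power_less_one_iff abs_square_less_1)

lemma kernel_primitive_nonneg: "0 \<le> x \<Longrightarrow> x \<le> 1 \<Longrightarrow> 0 \<le> kernel_primitive m x"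
  unfolding kernel_primitive_def by (simp add: abs_square_le_1)

definition sym_weight :: "real \<Rightarrow> real \<Rightarrow> real" where
  "sym_weight a x = (bernoulli_egf (a * (1 + x)) * bernoulli_egf (a * (1 - x)))\<^sup>2"

definition sym_weight_deriv :: "real \<Rightarrow> real \<Rightarrow> real" where
  "sym_weight_deriv a x =
     2 * a * sym_weight a x *
       (bernoulli_egf_logderiv (a * (1 + x)) - bernoulli_egf_logderiv (a * (1 - x)))"

lemma has_real_derivative_sym_weight:
  assumes "a * (1 + x) \<noteq> 0" "a * (1 - x) \<noteq> 0"
  shows "(sym_weight a has_real_derivative sym_weight_deriv a x) (at x)"
proof -
  have plus: "((\<lambda>x. bernoulli_egf (a * (1 + x))) has_real_derivative
      bernoulli_egf (a * (1 + x)) * bernoulli_egf_logderiv (a * (1 + x)) * a) (at x)"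
    by (rule DERIV_chain2[of _ _ "\<lambda>x. a * (1 + x)",
          OF has_real_derivative_bernoulli_egf[OF assms(1)]])
      (auto intro!: derivative_eq_intros)
  have minus: "((\<lambda>x. bernoulli_egf (a * (1 - x))) has_real_derivative
      bernoulli_egf (a * (1 - x)) * bernoulli_egf_logderiv (a * (1 - x)) * (- a)) (at x)"
    by (rule DERIV_chain2[of _ _ "\<lambda>x. a * (1 - x)",
          OF has_real_derivative_bernoulli_egf[OF assms(2)]])
      (auto intro!: derivative_eq_intros)
  show ?thesis
    using DERIV_power[OF DERIV_mult[OF plus minus], of 2]
    unfolding sym_weight_def [abs_def] sym_weight_deriv_def
    by (simp add: power2_eq_square algebra_simps)
qed

lemma sym_weight_deriv_neg:
  assumes "0 < a" "0 < x" "x < 1"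
  shows "sym_weight_deriv a x < 0"
proof -
  have "bernoulli_egf_logderiv (a * (1 + x)) < bernoulli_egf_logderiv (a * (1 - x))"
    using assms by (intro bernoulli_egf_logderiv_strict_decreasing) auto
  moreover have "sym_weight a x > 0"
    unfolding sym_weight_def by (intro zero_less_power mult_pos_pos bernoulli_egf_pos)
  ultimately show ?thesis
    unfolding sym_weight_deriv_def using assms by (simp add: mult_pos_neg)
qed

lemma sym_weight_kernel_integral_pos:
  assumes "0 < a"
  shows "integral {0..1} (\<lambda>x. sym_weight a x * kernel_primitive_deriv m x) > 0"
proof -
  define J where "J = integral {0..1} (\<lambda>x. sym_weight a x * kernel_primitive_deriv m x)"
  have cont: "continuous_on {0..1} (sym_weight a)"
    unfolding sym_weight_def [abs_def] by (intro continuous_intros)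
  have integral_J: "((\<lambda>x. sym_weight a x * kernel_primitive_deriv m x) has_integral J) {0..1}"
    unfolding J_def
  proof (intro integrable_integral integrable_continuous_interval)
    show "continuous_on {0..1} (\<lambda>x. sym_weight a x * kernel_primitive_deriv m x)"
      unfolding kernel_primitive_deriv_def by (intro continuous_intros cont)
  qed
  have by_parts: "((\<lambda>x. sym_weight_deriv a x * kernel_primitive m x) has_integral
                   sym_weight a 1 * kernel_primitive m 1 - J) {0..1}"
  proof (rule integration_by_parts_interior[OF bounded_bilinear_mult,
        where f = "sym_weight a" and g' = "kernel_primitive_deriv m"])
    show "continuous_on {0..1} (kernel_primitive m)"
      unfolding kernel_primitive_def [abs_def] by (intro continuous_intros)
  next
    fix x :: real assume "x \<in> {0<..<1}"
    with assms show "(sym_weight a has_vector_derivative sym_weight_deriv a x) (at x)"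
      by (simp add: has_real_derivative_sym_weight
          flip: has_real_derivative_iff_has_vector_derivative)
  next
    fix x :: real
    show "(kernel_primitive m has_vector_derivative kernel_primitive_deriv m x) (at x)"
      by (simp add: has_real_derivative_kernel_primitive
          flip: has_real_derivative_iff_has_vector_derivative)
  qed (use cont integral_J in \<open>simp_all add: kernel_primitive_def\<close>)
  (* Continuity is only claimed up to 1/2: at x = 1 the formula for sym_weight_deriv evaluates
     bernoulli_egf_logderiv at 0, a junk value. *)
  have "sym_weight a 1 * kernel_primitive m 1 - J < 0"
  proof (rule has_integral_neg_strict[OF by_parts, of "1 / 2"])
    show "continuous_on {0..1 / 2} (\<lambda>x. sym_weight_deriv a x * kernel_primitive m x)"
      unfolding sym_weight_deriv_def sym_weight_def kernel_primitive_def using assms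
      by (intro continuous_intros) auto
  next
    fix x :: real assume "x \<in> {0<..<1}"
    then show "sym_weight_deriv a x * kernel_primitive m x < 0"
      using assms sym_weight_deriv_neg kernel_primitive_pos by (simp add: mult_neg_pos)
  qed simp_all
  moreover have "sym_weight a 1 * kernel_primitive m 1 \<ge> 0"
    unfolding sym_weight_def using kernel_primitive_nonneg by simp
  ultimately show ?thesis unfolding J_def by linarith
qed

lemma I1_integrand_eq:
  assumes "a \<noteq> 0" "x\<^sup>2 \<noteq> 1"
  shows "((2 * real (m + 2) - 3) * x\<^sup>2 - 1) *
           fn_aux (m + 2) (a * (1 + x)) * fn_aux (m + 2) (a * (1 - x))
       = - (a ^ (2 * m) / a\<^sup>2) * (sym_weight a x * kernel_primitive_deriv m x)"
proof -
  define R where "R = (1 - x\<^sup>2) ^ (m + 1) / (1 - x\<^sup>2)\<^sup>2"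
  have uv: "a * (1 + x) * (a * (1 - x)) = a\<^sup>2 * (1 - x\<^sup>2)"
    by (simp add: power2_eq_square algebra_simps)
  have a_pow: "(a\<^sup>2) ^ (m + 1) / (a\<^sup>2)\<^sup>2 = a ^ (2 * m) / a\<^sup>2"
    using assms(1) by (simp add: power_mult power2_eq_square)
  have "fn_aux (m + 2) (a * (1 + x)) * fn_aux (m + 2) (a * (1 - x))
      = sym_weight a x * (a * (1 + x) * (a * (1 - x))) ^ (m + 1) / (a * (1 + x) * (a * (1 - x)))\<^sup>2"
    by (simp add: fn_aux_eq_bernoulli_egf sym_weight_def power_mult_distrib)
  also have "\<dots> = sym_weight a x * ((a\<^sup>2) ^ (m + 1) / (a\<^sup>2)\<^sup>2) * R"
    unfolding uv R_def by (simp add: power_mult_distrib)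
  finally have fn_prod: "fn_aux (m + 2) (a * (1 + x)) * fn_aux (m + 2) (a * (1 - x))
      = sym_weight a x * (a ^ (2 * m) / a\<^sup>2) * R"
    unfolding a_pow .
  have "1 - x\<^sup>2 \<noteq> 0" using assms(2) by simp
  then have kernel: "((2 * real m + 1) * x\<^sup>2 - 1) * R = - kernel_primitive_deriv m x"
    using kernel_primitive_deriv_eq[of x m] by (simp add: R_def field_simps)
  have "((2 * real (m + 2) - 3) * x\<^sup>2 - 1) *
          fn_aux (m + 2) (a * (1 + x)) * fn_aux (m + 2) (a * (1 - x))
      = sym_weight a x * (a ^ (2 * m) / a\<^sup>2) * (((2 * real m + 1) * x\<^sup>2 - 1) * R)"
    unfolding mult.assoc fn_prod by (simp only: mult_ac) simp
  then show ?thesis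
    unfolding kernel by simp
qed

theorem lemma3p1:
  fixes n :: nat and a :: real
  assumes "n \<ge> 2" and "a > 0"
  shows "I1 a n < 0"
proof -
  define m where "m = n - 2"
  have n: "n = m + 2" using assms(1) by (simp add: m_def)
  have "I1 a n = integral {0..1} (\<lambda>x. - (a ^ (2 * m) / a\<^sup>2) * (sym_weight a x * kernel_primitive_deriv m x))"
    unfolding I1_def n
  proof (rule integral_spike[of "{1}"])
    fix x :: real assume "x \<in> {0..1} - {1}"
    then have "x\<^sup>2 \<noteq> 1" by (simp add: power2_eq_1_iff)
    with assms(2) show "- (a ^ (2 * m) / a\<^sup>2) * (sym_weight a x * kernel_primitive_deriv m x) =
        ((2 * real (m + 2) - 3) * x\<^sup>2 - 1) * fn_aux (m + 2) (a * (1 + x)) * fn_aux (m + 2) (a * (1 - x))"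
      using I1_integrand_eq[of a x m] by simp
  qed simp
  also have "\<dots> = - (a ^ (2 * m) / a\<^sup>2) * integral {0..1} (\<lambda>x. sym_weight a x * kernel_primitive_deriv m x)"
    using integral_cmul[where c = "- (a ^ (2 * m) / a\<^sup>2)"] by simp
  also have "\<dots> < 0"
    using assms(2) sym_weight_kernel_integral_pos[OF assms(2)] by (simp add: mult_pos_pos)
  finally show ?thesis .
qed

end
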